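(* Let $m\in\mathrm{Hol}(\mathbb{D})$ with $m(0)\neq0$, $\beta\in\mathbb{T}$, and $n\in\mathbb{N}$ such that $\beta^k\neq1$ for $k=1,\dots,n$. Let $T:\mathrm{Hol}(\mathbb{D})\to\mathrm{Hol}(\mathbb{D})$ be given by $(Tf)(z)=m(z)f(\beta z)$. Then for each $k=1,\dots,n$, there is no $f\in\mathrm{Hol}(\mathbb{D})$ with $\beta^km(0)f-Tf=e_k$; that is, $e_k\notin(\beta^km(0)\mathrm{Id}-T)\mathrm{Hol}(\mathbb{D})$.
   Context: $\mathbb{D}$ is the open unit disc, $\mathbb{T}$ the unit circle, $\mathrm{Hol}(\mathbb{D})$ the space of holomorphic functions on $\mathbb{D}$, and $e_k(z)=z^k$ for $k\in\mathbb{N}_0$. *)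

theory Defs
  imports "HOL-Analysis.Analysis"
begin

end

theory Submission
  imports Defs "HOL-Complex_Analysis.Complex_Analysis"
begin

text \<open>If \<open>f = z\<^sup>j h\<close> solves \<open>\<beta>\<^sup>k m(0) f(z) - m(z) f(\<beta> z) = z\<^sup>k\<close> with \<open>j \<le> k\<close>, dividing by
  \<open>z\<^sup>j\<close> and letting \<open>z \<rightarrow> 0\<close> gives \<open>(\<beta>\<^sup>k - \<beta>\<^sup>j) m(0) h(0) = 0\<^sup>k\<^sup>-\<^sup>j\<close>. For \<open>j < k\<close> the
  factor \<open>\<beta>\<^sup>k - \<beta>\<^sup>j\<close> is nonzero, so \<open>h(0) = 0\<close> and \<open>f\<close> is divisible by \<open>z\<^sup>j\<^sup>+\<^sup>1\<close>;
  at \<open>j = k\<close> the same evaluation reads \<open>0 = 1\<close>.\<close>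

lemma isCont_eq_if_eventually_eq:
  fixes g p :: "'a::{perfect_space,t2_space} \<Rightarrow> 'b::t2_space"
  assumes "isCont g a" "isCont p a" "eventually (\<lambda>z. g z = p z) (at a)"
  shows "g a = p a"
proof -
  have "(p \<longlongrightarrow> g a) (at a)"
    using assms(1,3) tendsto_cong by (fastforce simp: isCont_def)
  with assms(2) show ?thesis
    by (auto simp: isCont_def intro: tendsto_unique[OF trivial_limit_at])
qed

lemma holomorphic_on_imp_isCont:
  assumes "f holomorphic_on S" "open S" "a \<in> S"
  shows "isCont f a"
  using assms continuous_on_eq_continuous_at holomorphic_on_imp_continuous_on by blast

lemma holomorphic_factor_zero:
  assumes "f holomorphic_on S" "open S" "f a = 0"
  shows "\<exists>g. g holomorphic_on S \<and> (\<forall>z\<in>S. f z = (z - a) * g z)"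
proof -
  let ?g = "\<lambda>z. if z = a then deriv f a else (f z - f a) / (z - a)"
  have "?g holomorphic_on S"
    using pole_lemma_open assms(1,2) by blast
  moreover have "\<forall>z\<in>S. f z = (z - a) * ?g z"
    using assms(3) by auto
  ultimately show ?thesis by blast
qed

lemma twisted_equation_at_zero:
  fixes f h m :: "complex \<Rightarrow> complex"
  assumes S: "open S" "0 \<in> S" "\<And>z. z \<in> S \<Longrightarrow> \<beta> * z \<in> S"
    and cont: "isCont h 0" "isCont m 0" and "j \<le> k"
    and factor: "\<And>z. z \<in> S \<Longrightarrow> f z = z ^ j * h z"
    and eqn: "\<And>z. z \<in> S \<Longrightarrow> c * f z - m z * f (\<beta> * z) = z ^ k"
  shows "(c - m 0 * \<beta> ^ j) * h 0 = 0 ^ (k - j)"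
proof -
  define G where "G z = c * h z - m z * \<beta> ^ j * h (\<beta> * z)" for z
  have G_eq: "G z = z ^ (k - j)" if "z \<in> S" "z \<noteq> 0" for z
  proof -
    have "z ^ j * G z = c * f z - m z * f (\<beta> * z)"
      using factor[OF \<open>z \<in> S\<close>] factor[OF S(3)[OF \<open>z \<in> S\<close>]]
      by (simp add: G_def power_mult_distrib algebra_simps)
    also have "\<dots> = z ^ j * z ^ (k - j)"
      using eqn[OF \<open>z \<in> S\<close>] \<open>j \<le> k\<close> by (simp flip: power_add)
    finally have "z ^ j * G z = z ^ j * z ^ (k - j)" .
    with \<open>z \<noteq> 0\<close> show ?thesis by simp
  qed
  have "eventually (\<lambda>z. G z = z ^ (k - j)) (at 0)"
    using eventually_at_in_open[OF S(1,2)] by (rule eventually_mono) (simp add: G_eq)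
  moreover have "isCont G 0"
    unfolding G_def using cont isCont_o2[where f = "\<lambda>z. \<beta> * z" and g = h]
    by (intro continuous_intros) simp_all
  ultimately have "G 0 = 0 ^ (k - j)"
    using isCont_eq_if_eventually_eq[where g = G and p = "\<lambda>z. z ^ (k - j)"] by simp
  then show ?thesis by (simp add: G_def algebra_simps)
qed

lemma twisted_equation_solution_divisible:
  fixes f m :: "complex \<Rightarrow> complex"
  assumes S: "open S" "0 \<in> S" "\<And>z. z \<in> S \<Longrightarrow> \<beta> * z \<in> S"
    and f: "f holomorphic_on S" and m: "isCont m 0" "m 0 \<noteq> 0"
    and powers: "\<And>i. i < k \<Longrightarrow> \<beta> ^ i \<noteq> \<beta> ^ k"
    and eqn: "\<And>z. z \<in> S \<Longrightarrow> \<beta> ^ k * m 0 * f z - m z * f (\<beta> * z) = z ^ k"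
    and "j \<le> k"
  shows "\<exists>h. h holomorphic_on S \<and> (\<forall>z\<in>S. f z = z ^ j * h z)"
  using \<open>j \<le> k\<close>
proof (induction j)
  case 0
  with f show ?case by auto
next
  case (Suc j)
  then obtain h where h: "h holomorphic_on S" and factor: "\<forall>z\<in>S. f z = z ^ j * h z"
    by auto
  have "isCont h 0"
    using h S(1,2) by (rule holomorphic_on_imp_isCont)
  then have "(\<beta> ^ k * m 0 - m 0 * \<beta> ^ j) * h 0 = 0 ^ (k - j)"
    using Suc.prems by (intro twisted_equation_at_zero[OF S _ m(1) _ factor[rule_format] eqn]) simp_all
  with Suc.prems have "(\<beta> ^ k * m 0 - m 0 * \<beta> ^ j) * h 0 = 0"
    by simp
  moreover have "\<beta> ^ k * m 0 - m 0 * \<beta> ^ j \<noteq> 0"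
    using powers[of j] Suc.prems m(2) by simp
  ultimately have "h 0 = 0" by simp
  then obtain g where g: "g holomorphic_on S" "\<forall>z\<in>S. h z = (z - 0) * g z"
    using holomorphic_factor_zero[OF h S(1)] by blast
  have "\<forall>z\<in>S. f z = z ^ Suc j * g z"
    using factor g(2) by (simp add: mult.assoc)
  with g(1) show ?case by blast
qed

lemma twisted_equation_unsolvable:
  fixes f m :: "complex \<Rightarrow> complex"
  assumes S: "open S" "0 \<in> S" "\<And>z. z \<in> S \<Longrightarrow> \<beta> * z \<in> S"
    and f: "f holomorphic_on S" and m: "isCont m 0" "m 0 \<noteq> 0"
    and powers: "\<And>i. i < k \<Longrightarrow> \<beta> ^ i \<noteq> \<beta> ^ k"
    and eqn: "\<And>z. z \<in> S \<Longrightarrow> \<beta> ^ k * m 0 * f z - m z * f (\<beta> * z) = z ^ k"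
  shows False
proof -
  obtain h where h: "h holomorphic_on S" and factor: "\<forall>z\<in>S. f z = z ^ k * h z"
    using twisted_equation_solution_divisible[OF assms order_refl] by blast
  have "isCont h 0"
    using h S(1,2) by (rule holomorphic_on_imp_isCont)
  then have "(\<beta> ^ k * m 0 - m 0 * \<beta> ^ k) * h 0 = 0 ^ (k - k)"
    by (intro twisted_equation_at_zero[OF S _ m(1) _ factor[rule_format] eqn]) simp_all
  then show False by simp
qed

theorem lemma2p5:
  fixes m :: "complex \<Rightarrow> complex" and \<beta> :: complex and n :: nat
  assumes "m holomorphic_on ball 0 1"
    and "m 0 \<noteq> 0"
    and "norm \<beta> = 1"
    and "\<And>k. k \<in> {1..n} \<Longrightarrow> \<beta> ^ k \<noteq> 1"
  shows "\<forall>k \<in> {1..n}. \<not> (\<exists>f. f holomorphic_on ball 0 1 \<and>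
           (\<forall>z \<in> ball 0 1. \<beta> ^ k * m 0 * f z - m z * f (\<beta> * z) = z ^ k))"
proof (intro ballI notI)
  fix k assume k: "k \<in> {1..n}"
  assume "\<exists>f. f holomorphic_on ball 0 1 \<and>
           (\<forall>z \<in> ball 0 1. \<beta> ^ k * m 0 * f z - m z * f (\<beta> * z) = z ^ k)"
  then obtain f where f: "f holomorphic_on ball 0 1"
    and eqn: "\<And>z. z \<in> ball 0 1 \<Longrightarrow> \<beta> ^ k * m 0 * f z - m z * f (\<beta> * z) = z ^ k"
    by blast
  have disc: "open (ball 0 1)" "0 \<in> ball 0 1" "\<And>z. z \<in> ball 0 1 \<Longrightarrow> \<beta> * z \<in> ball 0 1"
    using assms(3) by (auto simp: norm_mult)
  have "isCont m 0"
    using assms(1) disc(1,2) by (rule holomorphic_on_imp_isCont)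
  moreover have "\<beta> ^ i \<noteq> \<beta> ^ k" if "i < k" for i
  proof
    assume "\<beta> ^ i = \<beta> ^ k"
    moreover have "\<beta> ^ k = \<beta> ^ i * \<beta> ^ (k - i)"
      using that by (simp flip: power_add)
    ultimately have "\<beta> ^ (k - i) = 1"
      using assms(3) by auto
    moreover have "k - i \<in> {1..n}"
      using k that by auto
    ultimately show False
      using assms(4) by blast
  qed
  ultimately show False
    using twisted_equation_unsolvable[OF disc f _ assms(2) _ eqn] by blast
qed

end
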